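(* Let $a\in \mathcal{A}$. Then $a\in \mathcal{A}^{\mathrm{gcEP}}$ if and only if (1) $a\in \mathcal{A}^d$; and (2) there exists a projection $q\in \mathcal{A}$ such that $\ell(a^d)=\ell(q)$. In this case, $a^{\mathrm{gcEP}}=a^dq$.
   Context: $\mathcal{A}$ is a complex Banach *-algebra with identity; a projection is $q$ with $q=q^2=q^*$. $\mathcal{A}^d$ is the set of generalized Drazin invertible elements, with $a^d$ the generalized Drazin inverse ($a(a^d)^2=a^d$, $aa^d=a^da$, $a-a^2a^d$ quasinilpotent). $a$ has a generalized core-EP inverse if there is $x\in\mathcal{A}$ with $x=ax^2$, $(ax)^*=ax$, $\lim_{n\to\infty}\|a^n-xa^{n+1}\|^{1/n}=0$; this $x$ is unique, denoted $a^{\mathrm{gcEP}}$, and $\mathcal{A}^{\mathrm{gcEP}}$ is the set of such $a$. $\ell(\cdot)$ denotes the left annihilator. *)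

theory Defs
  imports "HOL-Analysis.Analysis"
begin

class complex_banach_star_algebra_1 = real_normed_algebra_1 + banach +
  fixes scaleC :: "complex \<Rightarrow> 'a \<Rightarrow> 'a"
    and star :: "'a \<Rightarrow> 'a"
  assumes scaleC_add_right: "scaleC c (x + y) = scaleC c x + scaleC c y"
    and scaleC_add_left: "scaleC (b + c) x = scaleC b x + scaleC c x"
    and scaleC_scaleC: "scaleC b (scaleC c x) = scaleC (b * c) x"
    and scaleC_one: "scaleC 1 x = x"
    and scaleC_of_real: "scaleC (complex_of_real r) x = scaleR r x"
    and scaleC_mult_left: "scaleC c x * y = scaleC c (x * y)"
    and scaleC_mult_right: "x * scaleC c y = scaleC c (x * y)"
    and norm_scaleC: "norm (scaleC c x) = cmod c * norm x"
    and star_star: "star (star x) = x"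
    and star_add: "star (x + y) = star x + star y"
    and star_mult: "star (x * y) = star y * star x"
    and star_scaleC: "star (scaleC c x) = scaleC (cnj c) (star x)"

definition quasinilpotent :: "'a::real_normed_algebra_1 \<Rightarrow> bool" where
  "quasinilpotent x \<longleftrightarrow> (\<lambda>n. norm (x ^ n) powr (1 / real n)) \<longlonglongrightarrow> 0"

definition is_gdrazin_inv :: "'a::real_normed_algebra_1 \<Rightarrow> 'a \<Rightarrow> bool" where
  "is_gdrazin_inv a x \<longleftrightarrow> a * x\<^sup>2 = x \<and> a * x = x * a \<and> quasinilpotent (a - a\<^sup>2 * x)"

definition gdrazin_set :: "'a::real_normed_algebra_1 set" where
  "gdrazin_set = {a. \<exists>x. is_gdrazin_inv a x}"

definition gdrazin :: "'a::real_normed_algebra_1 \<Rightarrow> 'a" where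
  "gdrazin a = (THE x. is_gdrazin_inv a x)"

definition projection :: "'a::complex_banach_star_algebra_1 \<Rightarrow> bool" where
  "projection q \<longleftrightarrow> q = q\<^sup>2 \<and> q = star q"

definition lann :: "'a::ring \<Rightarrow> 'a set" where
  "lann x = {y. y * x = 0}"

definition is_gcEP_inv :: "'a::complex_banach_star_algebra_1 \<Rightarrow> 'a \<Rightarrow> bool" where
  "is_gcEP_inv a x \<longleftrightarrow> x = a * x\<^sup>2 \<and> star (a * x) = a * x \<and>
     (\<lambda>n. norm (a ^ n - x * a ^ (n + 1)) powr (1 / real n)) \<longlonglongrightarrow> 0"

definition gcEP_set :: "'a::complex_banach_star_algebra_1 set" where
  "gcEP_set = {a. \<exists>x. is_gcEP_inv a x}"

definition gcEP :: "'a::complex_banach_star_algebra_1 \<Rightarrow> 'a" where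
  "gcEP a = (THE x. is_gcEP_inv a x)"

end

theory Submission
  imports Defs
begin

text \<open>
  All analytic input is that the residuals of the relevant limit conditions decay faster than
  every geometric sequence; everything else is algebra with idempotents.

  If \<open>x\<close> is the generalized core-EP inverse, then \<open>q = a x\<close> is a projection with \<open>x a x = x\<close>,
  and the residuals \<open>r\<^sub>n = a\<^sup>n - x a\<^sup>n\<^sup>+\<^sup>1\<close> decay superexponentially. The increments of
  \<open>D\<^sub>n = x\<^sup>n\<^sup>+\<^sup>2 a\<^sup>n\<^sup>+\<^sup>1\<close> are \<open>x\<^sup>n\<^sup>+\<^sup>3 a\<^sup>2 r\<^sub>n\<close>, so \<open>d = lim D\<^sub>n\<close> exists; it commutes with \<open>a\<close>,
  \<open>a d\<^sup>2 = d\<close>, \<open>q d = d\<close> and \<open>d a q = q\<close>, whence \<open>\<ell>(d) = \<ell>(q)\<close>. With \<open>p = 1 - a d\<close> one has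
  \<open>p x = 0\<close>, so \<open>(a p)\<^sup>n = p r\<^sub>n p\<close> and \<open>a - a\<^sup>2 d = a p\<close> is quasinilpotent: \<open>d = a\<^sup>d\<close>.

  Conversely \<open>\<ell>(a\<^sup>d) = \<ell>(q)\<close> gives \<open>q a\<^sup>d = a\<^sup>d\<close> and \<open>a a\<^sup>d q = q\<close>; then \<open>x = a\<^sup>d q\<close> satisfies
  \<open>x = a x\<^sup>2\<close>, \<open>a x = q\<close> and \<open>a\<^sup>n - x a\<^sup>n\<^sup>+\<^sup>1 = (1 - x a) a\<^sup>n (1 - a a\<^sup>d)\<close>, which is controlled by the
  quasinilpotent \<open>a (1 - a a\<^sup>d)\<close>.

  Both inverses are unique, which is what makes the definite descriptions in \<open>gdrazin\<close> and
  \<open>gcEP\<close> meaningful; each uniqueness identity is obtained by writing an element through arbitrarily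
  high powers, so that it is bounded by a decaying residual times a geometric factor.
\<close>

section \<open>Superexponentially decaying sequences\<close>

definition superexp_decay :: "(nat \<Rightarrow> real) \<Rightarrow> bool" where
  "superexp_decay t \<longleftrightarrow> (\<forall>e>0. eventually (\<lambda>n. t n \<le> e ^ n) sequentially)"

lemma superexp_decay_if_root_tendsto_zero:
  assumes nonneg: "\<And>n. t n \<ge> 0" and lim: "(\<lambda>n. t n powr (1 / real n)) \<longlonglongrightarrow> 0"
  shows "superexp_decay t"
  unfolding superexp_decay_def
proof (intro allI impI)
  fix e :: real assume e: "e > 0"
  show "eventually (\<lambda>n. t n \<le> e ^ n) sequentially"
    using order_tendstoD(2)[OF lim e] eventually_ge_at_top[of 1]
  proof eventually_elim
    case (elim n)
    show ?case
    proof (cases "t n = 0")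
      case True
      then show ?thesis using e by simp
    next
      case False
      then have "t n = (t n powr (1 / real n)) ^ n"
        using nonneg[of n] elim(2) by (simp add: powr_realpow [symmetric] powr_powr)
      also have "\<dots> \<le> e ^ n"
        using elim(1) by (intro power_mono) auto
      finally show ?thesis .
    qed
  qed
qed

lemma root_tendsto_zero_if_superexp_decay:
  assumes nonneg: "\<And>n. t n \<ge> 0" and decay: "superexp_decay t"
  shows "(\<lambda>n. t n powr (1 / real n)) \<longlonglongrightarrow> 0"
proof (rule order_tendstoI)
  fix c :: real assume "c < 0"
  then show "eventually (\<lambda>n. c < t n powr (1 / real n)) sequentially"
    by (intro always_eventually allI) (smt (verit) powr_ge_zero)
next
  fix c :: real assume c: "0 < c"
  have "eventually (\<lambda>n. t n \<le> (c / 2) ^ n) sequentially"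
    using decay c unfolding superexp_decay_def by auto
  then show "eventually (\<lambda>n. t n powr (1 / real n) < c) sequentially"
    using eventually_ge_at_top[of 1]
  proof eventually_elim
    case (elim n)
    have "t n powr (1 / real n) \<le> ((c / 2) ^ n) powr (1 / real n)"
      using elim nonneg[of n] by (intro powr_mono2) auto
    also have "\<dots> = c / 2"
      using elim(2) c by (simp add: powr_realpow [symmetric] powr_powr)
    finally show ?case using c by simp
  qed
qed

lemma quasinilpotent_iff_superexp_decay:
  "quasinilpotent w \<longleftrightarrow> superexp_decay (\<lambda>n. norm (w ^ n))"
  unfolding quasinilpotent_def
  using superexp_decay_if_root_tendsto_zero root_tendsto_zero_if_superexp_decay
  by (metis norm_ge_zero)

lemma superexp_decay_le_mult:
  assumes decay: "superexp_decay s"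
    and le: "eventually (\<lambda>n. t n \<le> K * s n) sequentially" and K: "K \<ge> 0"
  shows "superexp_decay t"
  unfolding superexp_decay_def
proof (intro allI impI)
  fix e :: real assume e: "e > 0"
  have "eventually (\<lambda>n. s n \<le> (e / (K + 1)) ^ n) sequentially"
    using decay e K unfolding superexp_decay_def by auto
  then show "eventually (\<lambda>n. t n \<le> e ^ n) sequentially"
    using le eventually_ge_at_top[of 1]
  proof eventually_elim
    case (elim n)
    have "K + 1 \<le> (K + 1) ^ n"
      using elim(3) K by (metis power_increasing power_one_right le_add_same_cancel2 zero_le_one)
    then have ratio: "K / (K + 1) ^ n \<le> 1"
      using K by simp
    have "t n \<le> K * (e / (K + 1)) ^ n"
      using elim(1,2) K by (meson mult_left_mono order_trans)
    also have "\<dots> = e ^ n * (K / (K + 1) ^ n)"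
      by (simp add: power_divide)
    also have "\<dots> \<le> e ^ n"
      using mult_left_le[OF ratio, of "e ^ n"] e by simp
    finally show ?case .
  qed
qed

lemma summable_superexp_decay_mult_power:
  assumes decay: "superexp_decay s" and nonneg: "\<And>n. s n \<ge> 0" and C: "C \<ge> 0"
  shows "summable (\<lambda>n. s n * C ^ n)"
proof (rule summable_comparison_test_ev)
  define e where "e = 1 / (2 * (C + 1))"
  have e: "e > 0" "e * C \<le> 1 / 2"
    using C by (auto simp: e_def field_simps)
  have "eventually (\<lambda>n. s n \<le> e ^ n) sequentially"
    using decay e unfolding superexp_decay_def by auto
  then show "eventually (\<lambda>n. norm (s n * C ^ n) \<le> (1 / 2) ^ n) sequentially"
  proof eventually_elim
    case (elim n)
    have "norm (s n * C ^ n) \<le> e ^ n * C ^ n"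
      using elim nonneg[of n] C by (simp add: mult_right_mono)
    also have "\<dots> = (e * C) ^ n"
      by (simp add: power_mult_distrib)
    also have "\<dots> \<le> (1 / 2) ^ n"
      using e C by (intro power_mono) auto
    finally show ?case .
  qed
  show "summable (\<lambda>n. (1 / 2 :: real) ^ n)"
    by (rule summable_geometric) simp
qed

lemma superexp_decay_bound_imp_zero:
  fixes z :: "'a::real_normed_vector"
  assumes decay: "superexp_decay s" and K: "K \<ge> 0" and C: "C \<ge> 0"
    and bound: "\<And>n. norm z \<le> K * s (n + k) * C ^ n"
  shows "z = 0"
proof -
  define e where "e = 1 / (2 * (C + 1))"
  have e: "e > 0" "e \<le> 1" "e * C \<le> 1 / 2"
    using C by (auto simp: e_def field_simps)
  obtain N where N: "\<And>m. m \<ge> N \<Longrightarrow> s m \<le> e ^ m"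
    using decay e unfolding superexp_decay_def eventually_sequentially by blast
  have bounded: "eventually (\<lambda>n. norm z \<le> K * (1 / 2) ^ n) sequentially"
    unfolding eventually_sequentially
  proof (intro exI allI impI)
    fix n assume "n \<ge> N"
    then have "s (n + k) \<le> e ^ n"
      using N[of "n + k"] power_decreasing[of n "n + k" e] e by simp
    then have "s (n + k) * C ^ n \<le> (e * C) ^ n"
      using C by (simp add: mult_right_mono power_mult_distrib)
    also have "\<dots> \<le> (1 / 2) ^ n"
      using e C by (intro power_mono) auto
    finally show "norm z \<le> K * (1 / 2) ^ n"
      using bound[of n] K by (metis mult.assoc mult_left_mono order_trans)
  qed
  have "(\<lambda>n. K * (1 / 2 :: real) ^ n) \<longlonglongrightarrow> 0"
    by (intro tendsto_mult_right_zero LIMSEQ_power_zero) auto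
  from tendsto_le[OF sequentially_bot this tendsto_const bounded] have "norm z \<le> 0"
    by simp
  then show ?thesis
    by simp
qed

lemma convergent_if_summable_differences:
  fixes f :: "nat \<Rightarrow> 'a::real_normed_vector"
  assumes "summable (\<lambda>n. f (Suc n) - f n)"
  shows "convergent f"
proof -
  have "convergent (\<lambda>n. f 0 + (\<Sum>i<n. f (Suc i) - f i))"
    using assms by (simp add: summable_iff_convergent convergent_add_const_iff)
  then show ?thesis
    by (simp add: sum_lessThan_telescope)
qed

lemma norm_mult_power_le:
  fixes x y :: "'a::real_normed_algebra_1"
  shows "norm (y * x ^ n) \<le> norm y * norm x ^ n"
proof -
  have "norm (y * x ^ n) \<le> norm y * norm (x ^ n)"
    by (rule norm_mult_ineq)
  also have "\<dots> \<le> norm y * norm x ^ n"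
    by (simp add: mult_left_mono norm_power_ineq)
  finally show ?thesis .
qed

lemma norm_power_mult_le:
  fixes x y :: "'a::real_normed_algebra_1"
  shows "norm (x ^ n * y) \<le> norm x ^ n * norm y"
proof -
  have "norm (x ^ n * y) \<le> norm (x ^ n) * norm y"
    by (rule norm_mult_ineq)
  also have "\<dots> \<le> norm x ^ n * norm y"
    by (simp add: mult_right_mono norm_power_ineq)
  finally show ?thesis .
qed

lemma power_mult_commuting_idem:
  fixes a p :: "'a::monoid_mult"
  assumes idem: "p * p = p" and comm: "a * p = p * a"
  shows "(a * p) ^ Suc n = a ^ Suc n * p"
proof (induction n)
  case 0
  then show ?case by simp
next
  case (Suc n)
  have "(a * p) ^ Suc (Suc n) = a * (p * a ^ Suc n) * p"
    using Suc by (simp add: mult.assoc)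
  also have "\<dots> = a * a ^ Suc n * (p * p)"
    by (simp only: power_commuting_commutes[OF comm, symmetric] mult.assoc)
  also have "\<dots> = a ^ Suc (Suc n) * p"
    using idem by simp
  finally show ?case .
qed

lemma outer_inverse_power:
  fixes a x :: "'a::monoid_mult"
  assumes "a * x\<^sup>2 = x"
  shows "a ^ n * x ^ Suc n = x"
proof (induction n)
  case 0
  then show ?case by simp
next
  case (Suc n)
  have "a ^ Suc n * x ^ Suc (Suc n) = a ^ n * ((a * x\<^sup>2) * x ^ n)"
    by (simp only: power_Suc2[of a n] power_Suc[of x] power2_eq_square mult.assoc)
  then show ?case
    using Suc assms by simp
qed

lemma commuting_outer_inverse_power:
  fixes a d :: "'a::monoid_mult"
  assumes "a * d\<^sup>2 = d" and comm: "a * d = d * a"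
  shows "d ^ Suc n * a ^ n = d"
proof -
  have "a * d ^ Suc n = d ^ Suc n * a"
    by (rule power_commuting_commutes[OF comm [symmetric], symmetric])
  then have "a ^ n * d ^ Suc n = d ^ Suc n * a ^ n"
    by (rule power_commuting_commutes)
  then show ?thesis
    using outer_inverse_power[OF assms(1), of n] by metis
qed

section \<open>Generalized Drazin inverses\<close>

lemma spectral_idempotent:
  fixes a d :: "'a::ring_1"
  assumes "a * d\<^sup>2 = d" and comm: "a * d = d * a"
  shows "(1 - a * d) * (1 - a * d) = 1 - a * d"
    and "a * (1 - a * d) = (1 - a * d) * a"
    and "a - a\<^sup>2 * d = a * (1 - a * d)"
proof -
  have "(a * d) * (a * d) = a * d"
    using assms by (metis mult.assoc power2_eq_square)
  then show "(1 - a * d) * (1 - a * d) = 1 - a * d"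
    by (simp add: algebra_simps)
  show "a * (1 - a * d) = (1 - a * d) * a"
    by (simp add: algebra_simps flip: comm)
  show "a - a\<^sup>2 * d = a * (1 - a * d)"
    by (simp add: algebra_simps power2_eq_square)
qed

lemma gdrazin_inv_annihilates_spectral_idempotent:
  fixes a d d' :: "'a::real_normed_algebra_1"
  assumes "is_gdrazin_inv a d" and "is_gdrazin_inv a d'"
  shows "d * (1 - a * d') = 0" and "(1 - a * d') * d = 0"
proof -
  define p where "p = 1 - a * d'"
  have d: "a * d\<^sup>2 = d" "a * d = d * a"
    using assms(1) unfolding is_gdrazin_inv_def by auto
  have d': "a * d'\<^sup>2 = d'" "a * d' = d' * a" "quasinilpotent (a - a\<^sup>2 * d')"
    using assms(2) unfolding is_gdrazin_inv_def by auto
  note p = spectral_idempotent[OF d'(1,2), folded p_def]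
  have decay: "superexp_decay (\<lambda>n. norm ((a * p) ^ n))"
    using d'(3) p(3) quasinilpotent_iff_superexp_decay by metis
  have bound_dp: "norm (d * p) \<le> norm d ^ 2 * norm ((a * p) ^ (n + 1)) * norm d ^ n" for n
  proof -
    have "d * p = d ^ Suc (Suc n) * a ^ Suc n * p"
      by (simp only: commuting_outer_inverse_power[OF d])
    then have "d * p = d ^ Suc (Suc n) * (a * p) ^ Suc n"
      by (simp only: mult.assoc power_mult_commuting_idem[OF p(1,2)])
    then have "norm (d * p) \<le> norm d ^ Suc (Suc n) * norm ((a * p) ^ Suc n)"
      by (simp only: norm_power_mult_le)
    then show ?thesis
      by (simp add: power2_eq_square mult_ac)
  qed
  show "d * (1 - a * d') = 0"
    unfolding p_def [symmetric] by (rule superexp_decay_bound_imp_zero[OF decay _ _ bound_dp]) simp_all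
  have bound_pd: "norm (p * d) \<le> norm d ^ 2 * norm ((a * p) ^ (n + 1)) * norm d ^ n" for n
  proof -
    have "p * d = p * a ^ Suc n * d ^ Suc (Suc n)"
      by (simp only: mult.assoc outer_inverse_power[OF d(1)])
    then have "p * d = (a * p) ^ Suc n * d ^ Suc (Suc n)"
      by (simp only: power_mult_commuting_idem[OF p(1,2)] power_commuting_commutes[OF p(2)])
    then have "norm (p * d) \<le> norm ((a * p) ^ Suc n) * norm d ^ Suc (Suc n)"
      by (simp only: norm_mult_power_le)
    then show ?thesis
      by (simp add: power2_eq_square mult_ac)
  qed
  show "(1 - a * d') * d = 0"
    unfolding p_def [symmetric] by (rule superexp_decay_bound_imp_zero[OF decay _ _ bound_pd]) simp_all
qed

lemma gdrazin_inv_unique: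
  fixes a d d' :: "'a::real_normed_algebra_1"
  assumes g: "is_gdrazin_inv a d" and g': "is_gdrazin_inv a d'"
  shows "d = d'"
proof -
  have d: "a * d\<^sup>2 = d" "a * d = d * a" and d': "a * d'\<^sup>2 = d'" "a * d' = d' * a"
    using g g' unfolding is_gdrazin_inv_def by auto
  have "d = d * (a * d')" and "d' = a * d * d'"
    using gdrazin_inv_annihilates_spectral_idempotent[OF g g']
      gdrazin_inv_annihilates_spectral_idempotent[OF g' g]
    by (simp_all add: algebra_simps)
  then have same_idempotent: "a * d = a * d'"
    using d(2) by (metis mult.assoc)
  have "d = (a * d) * d"
    using d by (metis mult.assoc power2_eq_square)
  also have "\<dots> = d' * (a * d)"
    using same_idempotent d(2) d'(2) by (metis mult.assoc)
  also have "\<dots> = d'"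
    using same_idempotent d' by (metis mult.assoc power2_eq_square)
  finally show ?thesis .
qed

lemma gdrazin_eqI:
  fixes a d :: "'a::real_normed_algebra_1"
  assumes "is_gdrazin_inv a d"
  shows "gdrazin a = d"
  unfolding gdrazin_def using assms by (rule the_equality) (rule gdrazin_inv_unique[OF _ assms])

lemma is_gdrazin_inv_gdrazin:
  assumes "a \<in> gdrazin_set"
  shows "is_gdrazin_inv a (gdrazin a)"
proof -
  from assms obtain d where d: "is_gdrazin_inv a d"
    unfolding gdrazin_set_def by auto
  then show ?thesis
    by (simp only: gdrazin_eqI[OF d])
qed

section \<open>Generalized core-EP inverses\<close>

lemma gcEP_inv_residual_decay:
  fixes a x :: "'a::complex_banach_star_algebra_1"
  assumes "is_gcEP_inv a x"
  shows "superexp_decay (\<lambda>n. norm (a ^ n - x * a ^ (n + 1)))"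
  using assms unfolding is_gcEP_inv_def by (intro superexp_decay_if_root_tendsto_zero) auto

lemma gcEP_inv_outer:
  fixes a x :: "'a::complex_banach_star_algebra_1"
  assumes "is_gcEP_inv a x"
  shows "a * x\<^sup>2 = x"
  using assms unfolding is_gcEP_inv_def by (rule conjE) (rule sym)

lemma gcEP_inv_power_sandwich:
  fixes a x :: "'a::complex_banach_star_algebra_1"
  assumes g: "is_gcEP_inv a x"
  shows "x * a ^ Suc k * x = a ^ k * x"
proof -
  define r where "r m = a ^ m - x * a ^ (m + 1)" for m
  have decay: "superexp_decay (\<lambda>m. norm (r m))"
    unfolding r_def by (rule gcEP_inv_residual_decay[OF g])
  have residual: "x * a ^ Suc k * x - a ^ k * x = - (r (n + k) * x ^ Suc n)" for n
  proof -
    have x: "a ^ n * x ^ Suc n = x"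
      by (rule outer_inverse_power[OF gcEP_inv_outer[OF g]])
    have long: "a ^ Suc k * a ^ n = a ^ (n + k + 1)"
      by (metis power_add add.commute add_Suc_right Suc_eq_plus1)
    have short: "a ^ k * a ^ n = a ^ (n + k)"
      by (simp add: power_add [symmetric] add.commute)
    have "x * a ^ Suc k * x - a ^ k * x
        = x * a ^ Suc k * (a ^ n * x ^ Suc n) - a ^ k * (a ^ n * x ^ Suc n)"
      by (simp only: x)
    also have "\<dots> = (x * (a ^ Suc k * a ^ n) - a ^ k * a ^ n) * x ^ Suc n"
      by (simp only: mult.assoc left_diff_distrib)
    also have "\<dots> = - (r (n + k) * x ^ Suc n)"
      unfolding long short r_def by (simp add: algebra_simps)
    finally show ?thesis .
  qed
  have bound: "norm (x * a ^ Suc k * x - a ^ k * x) \<le> norm x * norm (r (n + k)) * norm x ^ n" for n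
  proof -
    have "norm (x * a ^ Suc k * x - a ^ k * x) = norm (r (n + k) * x ^ Suc n)"
      by (simp only: residual[of n] norm_minus_cancel)
    also have "\<dots> \<le> norm (r (n + k)) * norm x ^ Suc n"
      by (rule norm_mult_power_le)
    also have "\<dots> = norm x * norm (r (n + k)) * norm x ^ n"
      by (simp add: mult_ac)
    finally show ?thesis .
  qed
  have "x * a ^ Suc k * x - a ^ k * x = 0"
    by (rule superexp_decay_bound_imp_zero[OF decay _ _ bound]) simp_all
  then show ?thesis
    by simp
qed

lemma gcEP_inv_identities:
  fixes a x :: "'a::complex_banach_star_algebra_1"
  assumes g: "is_gcEP_inv a x"
  shows "x * a * x = x" and "a * x * x = x" and "projection (a * x)"
proof -
  show xax: "x * a * x = x"
    using gcEP_inv_power_sandwich[OF g, of 0] by simp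
  show "a * x * x = x"
    using gcEP_inv_outer[OF g] by (simp add: power2_eq_square mult.assoc)
  have "(a * x)\<^sup>2 = a * x"
    using xax by (simp add: power2_eq_square mult.assoc)
  moreover have "star (a * x) = a * x"
    using g unfolding is_gcEP_inv_def by blast
  ultimately show "projection (a * x)"
    unfolding projection_def by simp
qed

lemma gcEP_inv_power_identities:
  fixes a x :: "'a::complex_banach_star_algebra_1"
  assumes g: "is_gcEP_inv a x"
  shows "x ^ k * a ^ k * (a * x) = a * x"
    and "a * x ^ Suc (Suc k) = x ^ Suc k"
    and "x ^ Suc k = x ^ Suc (Suc k) * (a * (a * x))"
    and "x ^ Suc k * a ^ Suc k * (x ^ Suc (Suc k) * a ^ Suc k) = x ^ Suc (Suc k) * a ^ Suc k"
proof -
  show "x ^ k * a ^ k * (a * x) = a * x"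
  proof (induction k)
    case (Suc k)
    have "x ^ Suc k * a ^ Suc k * (a * x) = x ^ k * (x * a ^ Suc (Suc k) * x)"
      by (simp only: power_Suc2 mult.assoc)
    also have "\<dots> = x ^ k * a ^ k * (a * x)"
      unfolding gcEP_inv_power_sandwich[OF g] by (simp only: power_Suc2 mult.assoc)
    also have "\<dots> = a * x"
      by (rule Suc.IH)
    finally show ?case .
  qed simp
  show "a * x ^ Suc (Suc k) = x ^ Suc k"
    using gcEP_inv_identities(2)[OF g] by (simp add: mult.assoc [symmetric])
  have x_ax: "x * (a * x) = x"
    using gcEP_inv_identities(1)[OF g] by (simp add: mult.assoc)
  have x_aax: "x * (a * (a * x)) = a * x"
    using gcEP_inv_power_sandwich[OF g, of 1] by (simp add: mult.assoc)
  have "x ^ Suc (Suc k) * (a * (a * x)) = x ^ Suc k * (x * (a * (a * x)))"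
    by (simp only: power_Suc2 mult.assoc)
  also have "\<dots> = x ^ k * (x * (a * x))"
    by (simp only: x_aax power_Suc2 mult.assoc)
  also have "\<dots> = x ^ Suc k"
    by (simp only: x_ax power_Suc2)
  finally show "x ^ Suc k = x ^ Suc (Suc k) * (a * (a * x))" ..
  have "x ^ Suc k * a ^ Suc k * (x ^ Suc (Suc k) * a ^ Suc k)
      = x ^ Suc k * (a ^ Suc k * x ^ Suc (Suc k)) * a ^ Suc k"
    by (simp only: mult.assoc)
  also have "\<dots> = x ^ Suc k * x * a ^ Suc k"
    by (simp only: outer_inverse_power[OF gcEP_inv_outer[OF g]])
  also have "\<dots> = x ^ Suc (Suc k) * a ^ Suc k"
    by (simp only: power_Suc2)
  finally show "x ^ Suc k * a ^ Suc k * (x ^ Suc (Suc k) * a ^ Suc k) = x ^ Suc (Suc k) * a ^ Suc k" .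
qed

lemma gcEP_inv_projection_absorb:
  fixes a u v :: "'a::complex_banach_star_algebra_1"
  assumes gu: "is_gcEP_inv a u" and gv: "is_gcEP_inv a v"
  shows "a * v * (a * u) = a * u"
proof -
  define r where "r m = a ^ m - v * a ^ (m + 1)" for m
  have decay: "superexp_decay (\<lambda>m. norm (r m))"
    unfolding r_def by (rule gcEP_inv_residual_decay[OF gv])
  have residual: "(1 - a * v) * (a * u) = a * r n * u ^ Suc n" for n
  proof -
    have u: "a ^ n * u ^ Suc n = u"
      by (rule outer_inverse_power[OF gcEP_inv_outer[OF gu]])
    have factor: "(1 - a * v) * (a * a ^ n) = a * r n"
      unfolding r_def by (simp add: algebra_simps)
    have "(1 - a * v) * (a * u) = (1 - a * v) * (a * (a ^ n * u ^ Suc n))"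
      by (simp only: u)
    also have "\<dots> = (1 - a * v) * (a * a ^ n) * u ^ Suc n"
      by (simp only: mult.assoc)
    also have "\<dots> = a * r n * u ^ Suc n"
      by (simp only: factor)
    finally show ?thesis .
  qed
  have bound: "norm ((1 - a * v) * (a * u)) \<le> norm a * norm u * norm (r (n + 0)) * norm u ^ n" for n
  proof -
    have "norm ((1 - a * v) * (a * u)) \<le> norm (a * r n) * norm u ^ Suc n"
      unfolding residual[of n] by (rule norm_mult_power_le)
    also have "\<dots> \<le> norm a * norm (r n) * norm u ^ Suc n"
      by (simp add: mult_right_mono norm_mult_ineq)
    also have "\<dots> = norm a * norm u * norm (r (n + 0)) * norm u ^ n"
      by (simp add: mult_ac)
    finally show ?thesis .
  qed
  have "(1 - a * v) * (a * u) = 0"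
    by (rule superexp_decay_bound_imp_zero[OF decay _ _ bound]) simp_all
  then show ?thesis
    by (simp only: left_diff_distrib mult_1_left right_minus_eq)
qed

lemma gcEP_inv_unique:
  fixes a x y :: "'a::complex_banach_star_algebra_1"
  assumes gx: "is_gcEP_inv a x" and gy: "is_gcEP_inv a y"
  shows "x = y"
proof -
  have x: "star (a * x) = a * x" and y: "star (a * y) = a * y"
    using gx gy unfolding is_gcEP_inv_def by auto
  note xy = gcEP_inv_projection_absorb[OF gx gy] and yx = gcEP_inv_projection_absorb[OF gy gx]
  have "a * x = star (a * x)"
    by (simp only: x)
  also have "\<dots> = star (a * y * (a * x))"
    by (simp only: xy)
  also have "\<dots> = a * x * (a * y)"
    by (simp only: star_mult[of "a * y" "a * x"] x y)
  also have "\<dots> = a * y"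
    by (simp only: yx)
  finally have same_projection: "a * x = a * y" .
  have y_outer: "a * y * y = y"
    by (rule gcEP_inv_identities(2)[OF gy])
  have x_aay: "x * (a * (a * y)) = a * y"
    using gcEP_inv_power_sandwich[OF gx, of 1] same_projection by (simp add: mult.assoc)
  have "x = x * (a * y)"
    using gcEP_inv_identities(1)[OF gx] same_projection by (simp add: mult.assoc)
  also have "\<dots> = x * (a * (a * y * y))"
    by (simp only: y_outer)
  also have "\<dots> = x * (a * (a * y)) * y"
    by (simp only: mult.assoc)
  also have "\<dots> = a * y * y"
    by (simp only: x_aay)
  also have "\<dots> = y"
    by (rule y_outer)
  finally show ?thesis .
qed

lemma gcEP_eqI:
  fixes a x :: "'a::complex_banach_star_algebra_1"
  assumes "is_gcEP_inv a x"
  shows "gcEP a = x"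
  unfolding gcEP_def using assms by (rule the_equality) (rule gcEP_inv_unique[OF _ assms])

section \<open>From the generalized Drazin inverse to the generalized core-EP inverse\<close>

lemma lann_eq_projection:
  fixes a d q :: "'a::complex_banach_star_algebra_1"
  assumes "a * d\<^sup>2 = d" and comm: "a * d = d * a"
    and q: "projection q" and lann: "lann d = lann q"
  shows "q * d = d" and "a * (d * q) = q"
proof -
  have "(1 - q) * q = 0"
    using q unfolding projection_def by (simp add: algebra_simps power2_eq_square)
  then have "(1 - q) * d = 0"
    using lann unfolding lann_def by auto
  then show "q * d = d"
    by (simp add: algebra_simps)
  have "d * a * d = a * d * d"
    by (simp only: comm)
  also have "\<dots> = d"
    using assms(1) by (simp add: power2_eq_square mult.assoc)
  finally have "(1 - d * a) * d = 0"
    by (simp add: left_diff_distrib)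
  then have "(1 - d * a) * q = 0"
    using lann unfolding lann_def by auto
  then have "q = d * a * q"
    by (simp add: left_diff_distrib)
  then show "a * (d * q) = q"
    by (simp only: mult.assoc [symmetric] comm)
qed

lemma drazin_projection_residual:
  fixes a d q :: "'a::ring_1"
  assumes outer: "a * d\<^sup>2 = d" and comm: "a * d = d * a" and qd: "q * d = d"
  shows "a ^ n - d * q * a ^ (n + 1) = (1 - d * q * a) * (a ^ n * (1 - a * d))"
proof -
  have "a ^ n * (a * d) = a ^ Suc n * d"
    by (simp add: power_Suc2 mult.assoc del: power_Suc)
  then have expand: "a ^ n * (1 - a * d) = a ^ n - d * a ^ (n + 1)"
    using power_commuting_commutes[OF comm, of "Suc n"] by (simp add: right_diff_distrib)
  have shift: "d * q * a * a ^ n = d * q * a ^ (n + 1)"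
    by (simp add: mult.assoc)
  have absorb: "d * q * a * (d * a ^ (n + 1)) = d * a ^ (n + 1)"
  proof -
    have "d * q * a * d = d * (q * d) * a"
      using comm by (simp add: mult.assoc)
    also have "\<dots> = d"
      using commuting_outer_inverse_power[OF outer comm, of 1] qd by (simp add: mult.assoc [symmetric])
    finally show ?thesis
      by (simp add: mult.assoc [symmetric])
  qed
  have "(1 - d * q * a) * (a ^ n * (1 - a * d))
      = a ^ n - d * q * a * a ^ n - (d * a ^ (n + 1) - d * q * a * (d * a ^ (n + 1)))"
    unfolding expand by (simp only: left_diff_distrib right_diff_distrib mult_1_left)
  also have "\<dots> = a ^ n - d * q * a ^ (n + 1)"
    by (simp only: shift absorb diff_self diff_zero)
  finally show ?thesis
    by (rule sym)
qed

lemma gcEP_inv_gdrazin_mult_projection: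
  fixes a d q :: "'a::complex_banach_star_algebra_1"
  assumes g: "is_gdrazin_inv a d" and q: "projection q" and lann: "lann d = lann q"
  shows "is_gcEP_inv a (d * q)"
proof -
  have d: "a * d\<^sup>2 = d" "a * d = d * a" "quasinilpotent (a - a\<^sup>2 * d)"
    using g unfolding is_gdrazin_inv_def by auto
  note qd = lann_eq_projection[OF d(1,2) q lann]
  define p where "p = 1 - a * d"
  note p = spectral_idempotent[OF d(1,2), folded p_def]
  have decay: "superexp_decay (\<lambda>n. norm ((a * p) ^ n))"
    using d(3) p(3) quasinilpotent_iff_superexp_decay by metis
  note residual = drazin_projection_residual[OF d(1,2) qd(1), folded p_def]
  have bound: "norm (a ^ Suc n - d * q * a ^ (Suc n + 1)) \<le> norm (1 - d * q * a) * norm ((a * p) ^ Suc n)"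
    for n
  proof -
    have "norm (a ^ Suc n - d * q * a ^ (Suc n + 1)) = norm ((1 - d * q * a) * (a * p) ^ Suc n)"
      by (simp only: residual power_mult_commuting_idem[OF p(1,2)])
    also have "\<dots> \<le> norm (1 - d * q * a) * norm ((a * p) ^ Suc n)"
      by (rule norm_mult_ineq)
    finally show ?thesis .
  qed
  have "eventually (\<lambda>n. norm (a ^ n - d * q * a ^ (n + 1))
                         \<le> norm (1 - d * q * a) * norm ((a * p) ^ n)) sequentially"
    by (rule eventually_sequentially_Suc [THEN iffD1]) (intro always_eventually allI bound)
  then have "superexp_decay (\<lambda>n. norm (a ^ n - d * q * a ^ (n + 1)))"
    by (rule superexp_decay_le_mult[OF decay]) simp
  moreover have "a * (d * q)\<^sup>2 = d * q"
    using qd by (simp add: power2_eq_square mult.assoc [symmetric])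
  moreover have "star q = q"
    using q unfolding projection_def by simp
  ultimately show ?thesis
    unfolding is_gcEP_inv_def using qd(2) root_tendsto_zero_if_superexp_decay by simp
qed

section \<open>From the generalized core-EP inverse to the generalized Drazin inverse\<close>

lemma lann_eq_if_right_multiples:
  fixes d q :: "'a::ring"
  assumes d: "d = q * b" and q: "q = d * c"
  shows "lann d = lann q"
proof (intro set_eqI iffI)
  fix y assume "y \<in> lann d"
  then have "y * d * c = 0"
    unfolding lann_def by simp
  then show "y \<in> lann q"
    unfolding lann_def using q by (simp add: mult.assoc)
next
  fix y assume "y \<in> lann q"
  then have "y * q * b = 0"
    unfolding lann_def by simp
  then show "y \<in> lann d"
    unfolding lann_def using d by (simp add: mult.assoc)
qed

lemma gcEP_inv_drazin_approx_convergent: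
  fixes a x :: "'a::complex_banach_star_algebra_1"
  assumes g: "is_gcEP_inv a x"
  shows "convergent (\<lambda>n. x ^ Suc (Suc n) * a ^ Suc n)"
proof (rule convergent_if_summable_differences)
  define r where "r m = a ^ m - x * a ^ (m + 1)" for m
  have decay: "superexp_decay (\<lambda>m. norm (r m))"
    unfolding r_def by (rule gcEP_inv_residual_decay[OF g])
  have increment: "x ^ Suc (Suc (Suc n)) * a ^ Suc (Suc n) - x ^ Suc (Suc n) * a ^ Suc n
                   = x ^ Suc (Suc (Suc n)) * (a * (a * r n))" for n
  proof -
    have "x ^ Suc (Suc n) * a ^ Suc n = x ^ Suc (Suc (Suc n)) * (a * (a * (x * a ^ Suc n)))"
      by (simp only: gcEP_inv_power_identities(3)[OF g, of "Suc n"] mult.assoc)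
    then show ?thesis
      unfolding r_def by (simp add: algebra_simps)
  qed
  have bound: "norm (x ^ Suc (Suc (Suc n)) * (a * (a * r n)))
               \<le> (norm x ^ 3 * norm a ^ 2) * (norm (r n) * norm x ^ n)" for n
  proof -
    have "norm (x ^ Suc (Suc (Suc n)) * (a * (a * r n)))
          \<le> norm x ^ Suc (Suc (Suc n)) * norm (a * (a * r n))"
      by (rule norm_power_mult_le)
    also have "\<dots> \<le> norm x ^ Suc (Suc (Suc n)) * (norm a * (norm a * norm (r n)))"
    proof (rule mult_left_mono)
      have "norm (a * (a * r n)) \<le> norm a * norm (a * r n)"
        by (rule norm_mult_ineq)
      also have "\<dots> \<le> norm a * (norm a * norm (r n))"
        by (simp add: mult_left_mono norm_mult_ineq)
      finally show "norm (a * (a * r n)) \<le> norm a * (norm a * norm (r n))" .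
    qed simp
    also have "\<dots> = (norm x ^ 3 * norm a ^ 2) * (norm (r n) * norm x ^ n)"
      by (simp add: eval_nat_numeral mult_ac)
    finally show ?thesis .
  qed
  have "summable (\<lambda>n. (norm x ^ 3 * norm a ^ 2) * (norm (r n) * norm x ^ n))"
    by (intro summable_mult summable_superexp_decay_mult_power[OF decay]) auto
  then show "summable (\<lambda>n. x ^ Suc (Suc (Suc n)) * a ^ Suc (Suc n) - x ^ Suc (Suc n) * a ^ Suc n)"
    unfolding increment by (rule summable_comparison_test'[where N = 0]) (rule bound)
qed

lemma gcEP_inv_drazin_approx_limit:
  fixes a x d :: "'a::complex_banach_star_algebra_1"
  assumes g: "is_gcEP_inv a x" and lim: "(\<lambda>n. x ^ Suc (Suc n) * a ^ Suc n) \<longlonglongrightarrow> d"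
  shows "a * d = d * a" and "a * d * (a * x) = a * x" and "a * x * (a * d) = a * d"
    and "a * d * d = d"
proof -
  define D where "D n = x ^ Suc (Suc n) * a ^ Suc n" for n
  define E where "E n = x ^ Suc n * a ^ Suc n" for n
  have E_q: "E n * (a * x) = a * x" for n
    unfolding E_def by (rule gcEP_inv_power_identities(1)[OF g])
  have q_E: "a * x * E n = E n" for n
    unfolding E_def using gcEP_inv_power_identities(2)[OF g, of n] by (simp add: mult.assoc [symmetric])
  have E_D: "E n * D n = D n" for n
    unfolding E_def D_def by (rule gcEP_inv_power_identities(4)[OF g])
  have D: "D \<longlonglongrightarrow> d"
    using lim unfolding D_def .
  have "E = (\<lambda>n. a * D n)"
    unfolding E_def D_def using gcEP_inv_power_identities(2)[OF g] by (simp add: mult.assoc [symmetric])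
  then have E: "E \<longlonglongrightarrow> a * d"
    using D by (simp add: tendsto_mult_left)
  have "(\<lambda>n. E (Suc n)) = (\<lambda>n. D n * a)"
    unfolding E_def D_def by (simp add: mult.assoc power_Suc2 del: power_Suc)
  then have "(\<lambda>n. E (Suc n)) \<longlonglongrightarrow> d * a"
    using tendsto_mult_right[OF D, of a] by (simp only:)
  then show "a * d = d * a"
    by (rule LIMSEQ_unique[OF LIMSEQ_Suc[OF E]])
  have "(\<lambda>n. E n * (a * x)) \<longlonglongrightarrow> a * d * (a * x)"
    by (rule tendsto_mult_right[OF E])
  then have "a * x = a * d * (a * x)"
    by (simp only: E_q LIMSEQ_const_iff)
  then show "a * d * (a * x) = a * x"
    by (rule sym)
  have "(\<lambda>n. a * x * E n) \<longlonglongrightarrow> a * x * (a * d)"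
    by (rule tendsto_mult_left[OF E])
  then have "E \<longlonglongrightarrow> a * x * (a * d)"
    by (simp only: q_E)
  from LIMSEQ_unique[OF E this] show "a * x * (a * d) = a * d"
    by (rule sym)
  have "(\<lambda>n. E n * D n) \<longlonglongrightarrow> a * d * d"
    by (rule tendsto_mult[OF E D])
  then have "D \<longlonglongrightarrow> a * d * d"
    by (simp only: E_D)
  then show "a * d * d = d"
    by (rule LIMSEQ_unique[OF _ D])
qed

lemma quasinilpotent_gcEP_complement:
  fixes a x p :: "'a::complex_banach_star_algebra_1"
  assumes g: "is_gcEP_inv a x"
    and idem: "p * p = p" and comm: "a * p = p * a" and annih: "p * (a * x) = 0"
  shows "quasinilpotent (a * p)"
proof -
  define r where "r m = a ^ m - x * a ^ (m + 1)" for m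
  have decay: "superexp_decay (\<lambda>m. norm (r m))"
    unfolding r_def by (rule gcEP_inv_residual_decay[OF g])
  have "p * x = p * (a * x * x)"
    by (simp only: gcEP_inv_identities(2)[OF g])
  then have px: "p * x = 0"
    using annih by (simp add: mult.assoc [symmetric])
  have power: "(a * p) ^ Suc m = p * r (Suc m) * p" for m
  proof -
    have p_residual: "p * a ^ Suc m = p * r (Suc m)"
      unfolding r_def using px by (simp add: right_diff_distrib mult.assoc [symmetric])
    have "(a * p) ^ Suc m = a ^ Suc m * p * p"
      by (simp only: power_mult_commuting_idem[OF idem comm] mult.assoc idem)
    also have "\<dots> = p * a ^ Suc m * p"
      by (simp only: power_commuting_commutes[OF comm])
    also have "\<dots> = p * r (Suc m) * p"
      by (simp only: p_residual)
    finally show ?thesis .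
  qed
  have bound: "norm ((a * p) ^ Suc m) \<le> norm p * norm p * norm (r (Suc m))" for m
  proof -
    have "norm ((a * p) ^ Suc m) \<le> norm (p * r (Suc m)) * norm p"
      unfolding power by (rule norm_mult_ineq)
    also have "\<dots> \<le> norm p * norm (r (Suc m)) * norm p"
      by (simp add: mult_right_mono norm_mult_ineq)
    finally show ?thesis
      by (simp add: mult_ac)
  qed
  have "eventually (\<lambda>n. norm ((a * p) ^ n) \<le> norm p * norm p * norm (r n)) sequentially"
    by (rule eventually_sequentially_Suc [THEN iffD1]) (intro always_eventually allI bound)
  then show ?thesis
    unfolding quasinilpotent_iff_superexp_decay by (rule superexp_decay_le_mult[OF decay]) simp
qed

lemma gdrazin_of_gcEP_inv:
  fixes a x :: "'a::complex_banach_star_algebra_1"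
  assumes g: "is_gcEP_inv a x"
  shows "a \<in> gdrazin_set" and "lann (gdrazin a) = lann (a * x)"
proof -
  obtain d where lim: "(\<lambda>n. x ^ Suc (Suc n) * a ^ Suc n) \<longlonglongrightarrow> d"
    using gcEP_inv_drazin_approx_convergent[OF g] unfolding convergent_def by blast
  note d = gcEP_inv_drazin_approx_limit[OF g lim]
  have outer: "a * d\<^sup>2 = d"
    using d(4) by (simp add: power2_eq_square mult.assoc)
  note p = spectral_idempotent[OF outer d(1)]
  have "(1 - a * d) * (a * x) = 0"
    using d(2) by (simp add: left_diff_distrib)
  then have "quasinilpotent (a - a\<^sup>2 * d)"
    unfolding p(3) by (rule quasinilpotent_gcEP_complement[OF g p(1,2)])
  then have gd: "is_gdrazin_inv a d"
    unfolding is_gdrazin_inv_def using outer d(1) by simp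
  then show "a \<in> gdrazin_set"
    unfolding gdrazin_set_def by blast
  have "a * x * d = a * x * (a * d * d)"
    by (simp only: d(4))
  also have "\<dots> = a * x * (a * d) * d"
    by (simp only: mult.assoc)
  also have "\<dots> = d"
    by (simp only: d(3,4))
  finally have d_multiple: "d = a * x * d" ..
  have q_multiple: "a * x = d * (a * (a * x))"
    using d(1,2) by (simp add: mult.assoc [symmetric])
  have "lann d = lann (a * x)"
    by (rule lann_eq_if_right_multiples[OF d_multiple q_multiple])
  then show "lann (gdrazin a) = lann (a * x)"
    using gdrazin_eqI[OF gd] by simp
qed

theorem theorem2p3:
  fixes a :: "'a::complex_banach_star_algebra_1"
  shows "(a \<in> gcEP_set \<longleftrightarrow>
            a \<in> gdrazin_set \<and> (\<exists>q. projection q \<and> lann (gdrazin a) = lann q))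
       \<and> (\<forall>q. a \<in> gcEP_set \<and> a \<in> gdrazin_set \<and> projection q \<and> lann (gdrazin a) = lann q
              \<longrightarrow> gcEP a = gdrazin a * q)"
proof -
  have backward: "is_gcEP_inv a (gdrazin a * q)"
    if "a \<in> gdrazin_set" and "projection q" and "lann (gdrazin a) = lann q" for q
    using gcEP_inv_gdrazin_mult_projection[OF is_gdrazin_inv_gdrazin] that by blast
  have forward: "a \<in> gdrazin_set \<and> (\<exists>q. projection q \<and> lann (gdrazin a) = lann q)"
    if "is_gcEP_inv a x" for x
    using gdrazin_of_gcEP_inv[OF that] gcEP_inv_identities(3)[OF that] by blast
  have "a \<in> gcEP_set \<longleftrightarrow> a \<in> gdrazin_set \<and> (\<exists>q. projection q \<and> lann (gdrazin a) = lann q)"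
  proof
    assume "a \<in> gcEP_set"
    then obtain x where "is_gcEP_inv a x"
      unfolding gcEP_set_def by auto
    then show "a \<in> gdrazin_set \<and> (\<exists>q. projection q \<and> lann (gdrazin a) = lann q)"
      by (rule forward)
  next
    assume "a \<in> gdrazin_set \<and> (\<exists>q. projection q \<and> lann (gdrazin a) = lann q)"
    then obtain q where "a \<in> gdrazin_set" "projection q" "lann (gdrazin a) = lann q"
      by blast
    from backward[OF this] show "a \<in> gcEP_set"
      unfolding gcEP_set_def by blast
  qed
  moreover have "gcEP a = gdrazin a * q"
    if "a \<in> gcEP_set \<and> a \<in> gdrazin_set \<and> projection q \<and> lann (gdrazin a) = lann q" for q
    using that by (intro gcEP_eqI backward) simp_all
  ultimately show ?thesis
    by blast
qed

end
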